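(* Let $(x_n)$ be a nonincreasing interval-filling sequence of positive reals with cardinal function $f$, and let $k\ge1$ be an integer such that $\#\{n\in\mathbb{N}: r_n>x_n\}\le k$. Then $f(x)\le 2^{k+1}$ for every $x\in\mathcal{A}((x_n))$ (in particular $f$ takes only finite values).
   Context: For a summable sequence $\mathbf{x}=(x_n)$ of positive reals, $\mathcal{A}(\mathbf{x})=\{\sum_{n\in A}x_n: A\subseteq\mathbb{N}\}$ is its achievement set and its cardinal function $f$ assigns to $x\in\mathcal{A}(\mathbf{x})$ the cardinality (a positive integer, $\omega$, or $\mathfrak{c}$) of $\{(\varepsilon_n)\in\{0,1\}^{\mathbb{N}}:\sum\varepsilon_nx_n=x\}$. The sequence is interval-filling if $\mathcal{A}(\mathbf{x})$ is an interval (equivalently $x_n\le r_n$ for all $n$). The tail sums are $r_n=\sum_{k=n+1}^\infty x_k$. *)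

theory Defs
  imports "HOL-Analysis.Analysis"
begin

text \<open>Sequences are indexed by nat (starting at 0). A 0-1 sequence
  (eps_n) is identified with the set A = {n. eps_n = 1}.\<close>

definition subsum :: "(nat \<Rightarrow> real) \<Rightarrow> nat set \<Rightarrow> real" where
  "subsum x A = (\<Sum>n. if n \<in> A then x n else 0)"

definition achievement_set :: "(nat \<Rightarrow> real) \<Rightarrow> real set" where
  "achievement_set x = {subsum x A | A. A \<subseteq> (UNIV :: nat set)}"

definition tail :: "(nat \<Rightarrow> real) \<Rightarrow> nat \<Rightarrow> real" where
  "tail x n = (\<Sum>k. x (k + Suc n))"

definition interval_filling :: "(nat \<Rightarrow> real) \<Rightarrow> bool" where
  "interval_filling x \<longleftrightarrow> (\<forall>n. x n \<le> tail x n)"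

text \<open>The set of representations of y; the cardinal function f(y) is its cardinality.\<close>
definition representations :: "(nat \<Rightarrow> real) \<Rightarrow> real \<Rightarrow> nat set set" where
  "representations x y = {A. subsum x A = y}"

end

theory Submission
  imports Defs
begin

text \<open>Let \<open>S = {n. x n < r n}\<close>. If two distinct representations \<open>A\<close>, \<open>B\<close> of the same
  point agree on \<open>S\<close>, their first difference \<open>m\<close> lies outside \<open>S\<close>, so \<open>r m \<le> x m\<close>. Say
  \<open>m \<in> A - B\<close>: then the part of \<open>B\<close> beyond \<open>m\<close> must make up \<open>x m\<close> plus the part of \<open>A\<close>
  beyond \<open>m\<close>, and since it is at most \<open>r m \<le> x m\<close>, \<open>A\<close> has no elements beyond \<open>m\<close> while
  \<open>B\<close> contains all of them. Hence exactly one of \<open>A\<close>, \<open>B\<close> is finite, so at most two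
  representations share a given trace on \<open>S\<close>, and there are \<open>2 ^ card S\<close> traces.\<close>

lemma summable_restrict:
  fixes x :: "nat \<Rightarrow> real"
  assumes "\<And>n. x n \<ge> 0" and "summable x"
  shows "summable (\<lambda>n. if n \<in> A then x n else 0)"
  by (rule summable_comparison_test'[OF assms(2), of 0]) (simp add: assms(1))

lemma summable_tail_restrict:
  fixes x :: "nat \<Rightarrow> real"
  assumes "\<And>n. x n \<ge> 0" and "summable x"
  shows "summable (\<lambda>j. if j + Suc m \<in> A then x (j + Suc m) else 0)"
  using summable_ignore_initial_segment[OF summable_restrict[OF assms, of A], of "Suc m"] .

lemma subsum_split:
  fixes x :: "nat \<Rightarrow> real"
  assumes "\<And>n. x n \<ge> 0" and "summable x"
  shows "subsum x A = (\<Sum>n<m. if n \<in> A then x n else 0) + (if m \<in> A then x m else 0)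
           + (\<Sum>j. if j + Suc m \<in> A then x (j + Suc m) else 0)"
  using suminf_split_initial_segment[OF summable_restrict[OF assms], of A "Suc m"]
  by (simp add: subsum_def)

lemma tail_subsum_nonneg:
  fixes x :: "nat \<Rightarrow> real"
  assumes "\<And>n. x n \<ge> 0" and "summable x"
  shows "(\<Sum>j. if j + Suc m \<in> A then x (j + Suc m) else 0) \<ge> 0"
  using summable_tail_restrict[OF assms]
  by (rule suminf_nonneg) (simp add: assms(1))

lemma tail_subsum_le_tail:
  fixes x :: "nat \<Rightarrow> real"
  assumes "\<And>n. x n \<ge> 0" and "summable x"
  shows "(\<Sum>j. if j + Suc m \<in> A then x (j + Suc m) else 0) \<le> tail x m"
  unfolding tail_def
  by (rule suminf_le[OF _ summable_tail_restrict[OF assms]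
        summable_ignore_initial_segment[OF assms(2)]]) (simp add: assms(1))

lemma tail_subsum_eq_0_imp_disjoint:
  fixes x :: "nat \<Rightarrow> real"
  assumes pos: "\<And>n. x n > 0" and "summable x"
    and "(\<Sum>j. if j + Suc m \<in> A then x (j + Suc m) else 0) = 0"
  shows "A \<inter> {m<..} = {}"
proof -
  have "\<forall>j. (if j + Suc m \<in> A then x (j + Suc m) else 0) = 0"
    using assms(3) summable_tail_restrict[OF _ assms(2)]
    by (subst (asm) suminf_eq_zero_iff) (auto simp: less_imp_le pos)
  then have "j + Suc m \<notin> A" for j
    using pos[of "j + Suc m"] by (metis less_irrefl)
  then show ?thesis
    by (auto simp: less_iff_Suc_add add.commute)
qed

lemma tail_subsum_eq_tail_imp_subset:
  fixes x :: "nat \<Rightarrow> real"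
  assumes pos: "\<And>n. x n > 0" and summ: "summable x"
    and "(\<Sum>j. if j + Suc m \<in> A then x (j + Suc m) else 0) = tail x m"
  shows "{m<..} \<subseteq> A"
proof -
  let ?f = "\<lambda>j. x (j + Suc m) - (if j + Suc m \<in> A then x (j + Suc m) else 0)"
  have summ_tail: "summable (\<lambda>j. x (j + Suc m))"
    by (rule summable_ignore_initial_segment[OF summ])
  have summ_restr: "summable (\<lambda>j. if j + Suc m \<in> A then x (j + Suc m) else 0)"
    by (rule summable_tail_restrict) (simp_all add: less_imp_le pos summ)
  have "(\<Sum>j. ?f j) = tail x m - (\<Sum>j. if j + Suc m \<in> A then x (j + Suc m) else 0)"
    unfolding tail_def
    using suminf_diff[OF summ_tail summ_restr] by simp
  with assms(3) have "(\<Sum>j. ?f j) = 0"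
    by simp
  moreover have "summable ?f"
    by (rule summable_diff[OF summ_tail summ_restr])
  ultimately have "\<forall>j. ?f j = 0"
    by (subst (asm) suminf_eq_zero_iff) (auto simp: less_imp_le pos)
  then have "j + Suc m \<in> A" for j
    using pos[of "j + Suc m"] by (metis diff_zero less_irrefl)
  then show ?thesis
    by (auto simp: less_iff_Suc_add add.commute)
qed

lemma subsum_eq_at_first_difference:
  fixes x :: "nat \<Rightarrow> real"
  assumes pos: "\<And>n. x n > 0" and summ: "summable x"
    and eq: "subsum x A = subsum x B" and "m \<in> A" and "m \<notin> B"
    and agree: "\<And>n. n < m \<Longrightarrow> n \<in> A \<longleftrightarrow> n \<in> B"
    and small_tail: "tail x m \<le> x m"
  shows "A \<inter> {m<..} = {}" and "{m<..} \<subseteq> B"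
proof -
  have nonneg: "\<And>n. x n \<ge> 0"
    by (simp add: less_imp_le pos)
  define a where "a = (\<Sum>j. if j + Suc m \<in> A then x (j + Suc m) else 0)"
  define b where "b = (\<Sum>j. if j + Suc m \<in> B then x (j + Suc m) else 0)"
  have "(\<Sum>n<m. if n \<in> A then x n else 0) = (\<Sum>n<m. if n \<in> B then x n else 0)"
    by (rule sum.cong) (simp_all add: agree)
  with eq have "a + x m = b"
    using subsum_split[OF nonneg summ, of A m] subsum_split[OF nonneg summ, of B m]
      \<open>m \<in> A\<close> \<open>m \<notin> B\<close> by (simp add: a_def b_def)
  moreover have "a \<ge> 0" "b \<le> tail x m"
    unfolding a_def b_def
    using tail_subsum_nonneg[OF nonneg summ] tail_subsum_le_tail[OF nonneg summ] by auto
  ultimately have "a = 0" and "b = tail x m"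
    using small_tail by linarith+
  show "A \<inter> {m<..} = {}"
    using tail_subsum_eq_0_imp_disjoint[OF pos summ] \<open>a = 0\<close> by (simp add: a_def)
  show "{m<..} \<subseteq> B"
    using tail_subsum_eq_tail_imp_subset[OF pos summ] \<open>b = tail x m\<close> by (simp add: b_def)
qed

lemma subsum_eq_first_difference_finite:
  fixes x :: "nat \<Rightarrow> real"
  assumes "\<And>n. x n > 0" and "summable x"
    and "subsum x A = subsum x B" and "m \<in> A" and "m \<notin> B"
    and "\<And>n. n < m \<Longrightarrow> n \<in> A \<longleftrightarrow> n \<in> B"
    and "tail x m \<le> x m"
  shows "finite A \<and> infinite B"
proof
  have "A \<subseteq> {..m}"
    using subsum_eq_at_first_difference(1)[OF assms] by auto
  then show "finite A"
    by (rule finite_subset) simp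
  show "infinite B"
    using subsum_eq_at_first_difference(2)[OF assms] infinite_Ioi finite_subset by blast
qed

lemma representations_same_trace_finite_neq:
  fixes x :: "nat \<Rightarrow> real"
  assumes pos: "\<And>n. x n > 0" and summ: "summable x"
    and eq: "subsum x A = subsum x B" and "A \<noteq> B"
    and trace: "A \<inter> {n. tail x n > x n} = B \<inter> {n. tail x n > x n}"
  shows "finite A \<noteq> finite B"
proof -
  define D where "D = (A - B) \<union> (B - A)"
  have "D \<noteq> {}"
    using \<open>A \<noteq> B\<close> by (auto simp: D_def)
  define m where "m = (LEAST n. n \<in> D)"
  have "m \<in> D"
    unfolding m_def using \<open>D \<noteq> {}\<close> by (auto intro: LeastI)
  have agree: "n \<in> A \<longleftrightarrow> n \<in> B" if "n < m" for n
    using not_less_Least[of n "\<lambda>n. n \<in> D"] that by (auto simp: D_def m_def)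
  have "tail x m \<le> x m"
    using \<open>m \<in> D\<close> trace by (auto simp: D_def not_le[symmetric])
  show ?thesis
  proof (cases "m \<in> A")
    case True
    with \<open>m \<in> D\<close> have "m \<notin> B"
      by (auto simp: D_def)
    with subsum_eq_first_difference_finite[OF pos summ eq True _ agree \<open>tail x m \<le> x m\<close>]
    show ?thesis by blast
  next
    case False
    with \<open>m \<in> D\<close> have "m \<in> B"
      by (auto simp: D_def)
    with subsum_eq_first_difference_finite[OF pos summ eq[symmetric] _ False _ \<open>tail x m \<le> x m\<close>]
      agree show ?thesis by blast
  qed
qed

lemma card_representations_with_trace_le_2:
  fixes x :: "nat \<Rightarrow> real"
  assumes "\<And>n. x n > 0" and "summable x"
  shows "finite {A \<in> representations x y. A \<inter> {n. tail x n > x n} = T}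
           \<and> card {A \<in> representations x y. A \<inter> {n. tail x n > x n} = T} \<le> 2"
proof -
  define R where "R = {A \<in> representations x y. A \<inter> {n. tail x n > x n} = T}"
  have "inj_on finite R"
    using representations_same_trace_finite_neq[OF assms(1,2)]
    by (auto simp: inj_on_def R_def representations_def)
  then show ?thesis
    using card_inj_on_le[of finite R UNIV] finite_imageD[of finite R]
    by (auto intro: finite_subset simp: R_def)
qed

lemma card_representations_le:
  fixes x :: "nat \<Rightarrow> real"
  assumes "\<And>n. x n > 0" and "summable x"
    and fin: "finite {n. tail x n > x n}"
  shows "finite (representations x y)
           \<and> card (representations x y) \<le> 2 ^ (card {n. tail x n > x n} + 1)"
proof -
  define S where "S = {n. tail x n > x n}"
  define R where "R = (\<lambda>T. {A \<in> representations x y. A \<inter> S = T})"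
  have fibre: "finite (R T) \<and> card (R T) \<le> 2" for T
    unfolding R_def S_def by (rule card_representations_with_trace_le_2[OF assms(1,2)])
  have union: "representations x y = (\<Union>T\<in>Pow S. R T)"
    by (auto simp: R_def)
  have "finite S"
    using fin by (simp add: S_def)
  have "card (representations x y) \<le> (\<Sum>T\<in>Pow S. card (R T))"
    unfolding union by (rule card_UN_le) (simp add: \<open>finite S\<close>)
  also have "\<dots> \<le> (\<Sum>T\<in>Pow S. 2)"
    by (rule sum_mono) (use fibre in auto)
  also have "\<dots> = 2 ^ (card S + 1)"
    by (simp add: card_Pow \<open>finite S\<close>)
  finally show ?thesis
    using \<open>finite S\<close> fibre by (simp add: union S_def)
qed

theorem theorem4p11:
  fixes x :: "nat \<Rightarrow> real" and k :: nat
  assumes pos: "\<And>n. x n > 0"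
    and summ: "summable x"
    and noninc: "decseq x"
    and fill: "interval_filling x"
    and k1: "k \<ge> 1"
    and fin: "finite {n. tail x n > x n}"
    and cardk: "card {n. tail x n > x n} \<le> k"
  shows "\<forall>y \<in> achievement_set x. finite (representations x y) \<and>
            card (representations x y) \<le> 2 ^ (k + 1)"
proof
  fix y
  have "2 ^ (card {n. tail x n > x n} + 1) \<le> (2 :: nat) ^ (k + 1)"
    by (rule power_increasing) (use cardk in auto)
  then show "finite (representations x y) \<and> card (representations x y) \<le> 2 ^ (k + 1)"
    using card_representations_le[OF pos summ fin, of y] by linarith
qed

end
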